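(* Let $T=T^{n-1}$ act linearly on $\mathbb{C}^n$ by a representation in general position. Then the orbit space $\mathbb{C}^n/T$ is homeomorphic to $\mathbb{R}^{n+1}$.
   Context: A representation of $T^{n-1}$ on $\mathbb{C}^n$ decomposes as $V(\alpha_1)\oplus\cdots\oplus V(\alpha_n)$ with weights $\alpha_i\in\mathrm{Hom}(T,S^1)\cong\mathbb{Z}^{n-1}$, where $V(\alpha)$ is $\mathbb{C}$ with $t\cdot z=\alpha(t)z$. It is in general position if every $n-1$ of the $n$ weights are linearly independent. *)

theory Defs
  imports "HOL-Analysis.Analysis"
begin

definition Complex_space :: "nat \<Rightarrow> (nat \<Rightarrow> complex) topology" where
  "Complex_space n = subtopology (product_topology (\<lambda>_. euclidean) UNIV) {z. \<forall>i\<ge>n. z i = 0}"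

definition torus :: "nat \<Rightarrow> (nat \<Rightarrow> complex) set" where
  "torus m = {t. (\<forall>j<m. norm (t j) = 1) \<and> (\<forall>j\<ge>m. t j = 1)}"

definition character :: "nat \<Rightarrow> (nat \<Rightarrow> int) \<Rightarrow> (nat \<Rightarrow> complex) \<Rightarrow> complex" where
  "character m w t = (\<Prod>j<m. t j powi w j)"

definition torus_act :: "nat \<Rightarrow> (nat \<Rightarrow> nat \<Rightarrow> int) \<Rightarrow> (nat \<Rightarrow> complex) \<Rightarrow> (nat \<Rightarrow> complex) \<Rightarrow> (nat \<Rightarrow> complex)" where
  "torus_act n \<alpha> t z = (\<lambda>i. if i < n then character (n - 1) (\<alpha> i) t * z i else 0)"

definition torus_orbit :: "nat \<Rightarrow> (nat \<Rightarrow> nat \<Rightarrow> int) \<Rightarrow> (nat \<Rightarrow> complex) \<Rightarrow> (nat \<Rightarrow> complex) set" where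
  "torus_orbit n \<alpha> z = (\<lambda>t. torus_act n \<alpha> t z) ` torus (n - 1)"

definition quotient_topology :: "'a topology \<Rightarrow> ('a \<Rightarrow> 'a set) \<Rightarrow> 'a set topology" where
  "quotient_topology X cls =
     topology (\<lambda>U. U \<subseteq> cls ` topspace X \<and> openin X {x \<in> topspace X. cls x \<in> U})"

lemma istopology_quotient_topology:
  "istopology (\<lambda>U. U \<subseteq> cls ` topspace X \<and> openin X {x \<in> topspace X. cls x \<in> U})"
  unfolding istopology_def
proof safe
  fix S T assume "S \<subseteq> cls ` topspace X" "openin X {x \<in> topspace X. cls x \<in> S}"
    "T \<subseteq> cls ` topspace X" "openin X {x \<in> topspace X. cls x \<in> T}"
  then have "openin X ({x \<in> topspace X. cls x \<in> S} \<inter> {x \<in> topspace X. cls x \<in> T})" by blast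
  moreover have "{x \<in> topspace X. cls x \<in> S \<inter> T} = {x \<in> topspace X. cls x \<in> S} \<inter> {x \<in> topspace X. cls x \<in> T}" by blast
  ultimately show "openin X {x \<in> topspace X. cls x \<in> S \<inter> T}" by simp
next
  fix K assume K: "\<forall>U\<in>K. U \<subseteq> cls ` topspace X \<and> openin X {x \<in> topspace X. cls x \<in> U}"
  have "{x \<in> topspace X. cls x \<in> \<Union>K} = (\<Union>U\<in>K. {x \<in> topspace X. cls x \<in> U})" by blast
  moreover have "openin X (\<Union>U\<in>K. {x \<in> topspace X. cls x \<in> U})" using K by blast
  ultimately show "openin X {x \<in> topspace X. cls x \<in> \<Union>K}" by simp
qed auto

lemma openin_quotient_topology:
  "openin (quotient_topology X cls) U \<longleftrightarrow> U \<subseteq> cls ` topspace X \<and> openin X {x \<in> topspace X. cls x \<in> U}"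
  unfolding quotient_topology_def by (simp add: istopology_quotient_topology)

definition orbit_space :: "nat \<Rightarrow> (nat \<Rightarrow> nat \<Rightarrow> int) \<Rightarrow> (nat \<Rightarrow> complex) set topology" where
  "orbit_space n \<alpha> = quotient_topology (Complex_space n) (torus_orbit n \<alpha>)"

definition weights_independent :: "nat \<Rightarrow> (nat \<Rightarrow> nat \<Rightarrow> int) \<Rightarrow> nat set \<Rightarrow> bool" where
  "weights_independent m \<alpha> S \<longleftrightarrow>
     (\<forall>c :: nat \<Rightarrow> int. (\<forall>j<m. (\<Sum>i\<in>S. c i * \<alpha> i j) = 0) \<longrightarrow> (\<forall>i\<in>S. c i = 0))"

definition general_position :: "nat \<Rightarrow> (nat \<Rightarrow> nat \<Rightarrow> int) \<Rightarrow> bool" where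
  "general_position n \<alpha> \<longleftrightarrow>
     (\<forall>S. S \<subseteq> {..<n} \<and> card S = n - 1 \<longrightarrow> weights_independent (n - 1) \<alpha> S)"

end

theory Submission
  imports Defs "Jordan_Normal_Form.Determinant" "HOL-Library.Real_Mod"
begin

(* The n weights span a lattice of rank n - 1 in Z^(n-1), so up to scaling they satisfy
   exactly one integer relation sum_i c_i alpha_i = 0; general position forces every c_i to be
   nonzero, and we take c primitive. The moduli |z_i| and the monomial prod_i z_i^(c_i) (negative
   powers taken as powers of the conjugate) are invariant under the torus, and they separate orbits,
   because the kernel of the character u |-> prod_i u_i^(c_i) of T^n is exactly the image of
   T^(n-1) under the weights. Packing the invariants as W = (min_i |z_i|) sgn (monomial) in C
   together with the differences |z_i| - |z_0| in R^(n-1) gives a continuous surjection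
   C^n -> R^(n+1) whose fibres are the orbits. It is proper, since every |z_i| is bounded in terms
   of the image point, hence a quotient map, and so it induces the homeomorphism. *)

section \<open>Quotient maps and continuity\<close>

lemma topspace_quotient_topology:
  "topspace (quotient_topology X cls) = cls ` topspace X"
proof
  show "topspace (quotient_topology X cls) \<subseteq> cls ` topspace X"
    using openin_topspace[of "quotient_topology X cls"] by (simp only: openin_quotient_topology)
  have "{x \<in> topspace X. cls x \<in> cls ` topspace X} = topspace X"
    by auto
  then have "openin (quotient_topology X cls) (cls ` topspace X)"
    by (simp add: openin_quotient_topology)
  then show "cls ` topspace X \<subseteq> topspace (quotient_topology X cls)"
    by (rule openin_subset)
qed

lemma quotient_map_quotient_topology: "quotient_map X (quotient_topology X cls) cls"
  unfolding quotient_map_def topspace_quotient_topology openin_quotient_topology by auto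

lemma quotient_topology_homeomorphic_space:
  assumes f: "quotient_map X Y f"
    and fibres: "\<And>x x'. x \<in> topspace X \<Longrightarrow> x' \<in> topspace X \<Longrightarrow> cls x = cls x' \<longleftrightarrow> f x = f x'"
  shows "quotient_topology X cls homeomorphic_space Y"
proof -
  let ?Q = "quotient_topology X cls"
  obtain g where gf: "\<And>x. x \<in> topspace X \<Longrightarrow> g (cls x) = f x"
    using quotient_map_lift_exists[OF quotient_map_quotient_topology quotient_imp_continuous_map[OF f]]
      fibres by metis
  have "quotient_map X Y (g \<circ> cls)"
    using quotient_map_eq[OF f] gf by simp
  then have "quotient_map ?Q Y g"
    using quotient_map_compose_eq[OF quotient_map_quotient_topology] by blast
  moreover have "inj_on g (topspace ?Q)"
    unfolding topspace_quotient_topology inj_on_def using gf fibres by auto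
  ultimately show ?thesis
    using homeomorphic_map_def homeomorphic_map_imp_homeomorphic_space by blast
qed

lemma quotient_map_into_Euclidean_space:
  assumes cont: "continuous_map X (Euclidean_space m) f"
    and surj: "f ` topspace X = topspace (Euclidean_space m)"
    and compact: "\<And>K. compactin (Euclidean_space m) K \<Longrightarrow> compactin X {x \<in> topspace X. f x \<in> K}"
  shows "quotient_map X (Euclidean_space m) f"
proof -
  have "proper_map X (Euclidean_space m) f"
    by (rule compact_imp_proper_map[OF locally_compact_imp_k_space[OF locally_compact_Euclidean_space]
          Hausdorff_imp_kc_space[OF Hausdorff_Euclidean_space] continuous_map_funspace[OF cont]
          disjI1[OF cont] compact])
  then show ?thesis
    using cont surj continuous_closed_imp_quotient_map proper_imp_closed_map by blast
qed

lemma continuous_on_scaleR_sgn: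
  "continuous_on {p :: real \<times> 'a::real_normed_vector. snd p = 0 \<longrightarrow> fst p = 0}
     (\<lambda>p. fst p *\<^sub>R sgn (snd p))"
proof -
  let ?K = "{p :: real \<times> 'a. snd p = 0 \<longrightarrow> fst p = 0}"
  have "continuous (at p within ?K) (\<lambda>p. fst p *\<^sub>R sgn (snd p))" if p: "p \<in> ?K" for p
  proof (cases "snd p = 0")
    case True
    then have "fst p = 0"
      using p by simp
    then have lim: "((\<lambda>q. \<bar>fst q\<bar>) \<longlongrightarrow> 0) (at p within ?K)"
      using tendsto_rabs[OF tendsto_fst[OF tendsto_ident_at[of p ?K]]] by simp
    have bound: "\<forall>q. norm (fst q *\<^sub>R sgn (snd q)) \<le> \<bar>fst q\<bar>"
      by (simp add: norm_sgn)
    have "((\<lambda>q. fst q *\<^sub>R sgn (snd q)) \<longlongrightarrow> 0) (at p within ?K)"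
      by (rule Lim_null_comparison[OF always_eventually[OF bound] lim])
    then show ?thesis
      using True by (simp add: continuous_within)
  next
    case False
    then show ?thesis
      by (intro continuous_intros) auto
  qed
  then show ?thesis
    by (simp add: continuous_on_eq_continuous_within)
qed

lemma continuous_map_prod_normed_algebra:
  fixes f :: "'a \<Rightarrow> 'c \<Rightarrow> 'b::{real_normed_algebra,comm_ring_1}"
  shows "finite I \<Longrightarrow> (\<And>i. i \<in> I \<Longrightarrow> continuous_map X euclidean (\<lambda>x. f x i))
    \<Longrightarrow> continuous_map X euclidean (\<lambda>x. \<Prod>i\<in>I. f x i)"
  by (simp add: continuous_map_atin tendsto_prod)

lemma continuous_map_pair_euclidean:
  "continuous_map X euclidean f \<Longrightarrow> continuous_map X euclidean g
    \<Longrightarrow> continuous_map X euclidean (\<lambda>x. (f x, g x))"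
  by (simp add: continuous_map_atin tendsto_Pair)

lemma continuous_map_Min:
  assumes "finite I" "I \<noteq> {}" "\<And>i. i \<in> I \<Longrightarrow> continuous_map X euclideanreal (f i)"
  shows "continuous_map X euclideanreal (\<lambda>x. Min ((\<lambda>i. f i x) ` I))"
  using assms
proof (induction I rule: finite_ne_induct)
  case (insert a F)
  then have "continuous_map X euclideanreal (\<lambda>x. min (f a x) (Min ((\<lambda>i. f i x) ` F)))"
    by (intro continuous_map_real_min) auto
  then show ?case
    using insert by simp
qed simp

lemma continuous_map_Euclidean_space_coordinate:
  "continuous_map (Euclidean_space n) euclideanreal (\<lambda>x. x k)"
  unfolding Euclidean_space_def
  by (intro continuous_map_from_subtopology continuous_map_product_projection) simp

lemma topspace_Complex_space: "topspace (Complex_space n) = {z. \<forall>i\<ge>n. z i = 0}"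
  by (simp add: Complex_space_def)

lemma continuous_map_Complex_space_coordinate:
  "continuous_map (Complex_space n) euclidean (\<lambda>z. z i)"
  unfolding Complex_space_def
  by (intro continuous_map_from_subtopology continuous_map_product_projection) simp

lemma compactin_Complex_space_box:
  "compactin (Complex_space n) {z. (\<forall>i<n. norm (z i) \<le> R) \<and> (\<forall>i\<ge>n. z i = 0)}"
proof -
  have box: "{z. (\<forall>i<n. norm (z i) \<le> R) \<and> (\<forall>i\<ge>n. z i = 0)}
      = PiE UNIV (\<lambda>i. if i < n then cball (0 :: complex) R else {0})"
    by (auto simp: PiE_UNIV_domain Pi_def not_less)
  have "compactin (product_topology (\<lambda>_. euclidean) UNIV) (PiE UNIV (\<lambda>i. if i < n then cball (0 :: complex) R else {0}))"
    by (subst compactin_PiE) auto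
  then show ?thesis
    unfolding Complex_space_def compactin_subtopology box[symmetric] by auto
qed

section \<open>The primitive relation among the weights\<close>

lemma int_matrix_adjugate:
  fixes a :: "nat \<Rightarrow> nat \<Rightarrow> int"
  assumes indep: "\<And>v. (\<forall>j<m. (\<Sum>i<m. v i * a i j) = 0) \<Longrightarrow> \<forall>i<m. v i = 0"
  obtains D B where "D \<noteq> 0"
    and "\<And>i k. i < m \<Longrightarrow> k < m \<Longrightarrow> (\<Sum>j<m. a i j * B j k) = (if i = k then D else 0)"
    and "\<And>i k. i < m \<Longrightarrow> k < m \<Longrightarrow> (\<Sum>j<m. B i j * a j k) = (if i = k then D else 0)"
proof
  define A where "A = mat m m (\<lambda>(i, j). a i j)"
  have A: "A \<in> carrier_mat m m" and adj: "adj_mat A \<in> carrier_mat m m"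
    unfolding A_def by (simp_all add: adj_mat(1))
  show "det A \<noteq> 0"
  proof
    assume "det A = 0"
    then obtain v where v: "v \<in> carrier_vec m" "v \<noteq> 0\<^sub>v m" "transpose_mat A *\<^sub>v v = 0\<^sub>v m"
      using det_0_iff_vec_prod_zero[of "transpose_mat A" m] A det_transpose[OF A] by auto
    have "(\<Sum>i<m. v $ i * a i j) = 0" if "j < m" for j
    proof -
      have "(\<Sum>i<m. v $ i * a i j) = (transpose_mat A *\<^sub>v v) $ j"
        using that v(1) A unfolding A_def by (simp add: scalar_prod_def atLeast0LessThan mult.commute)
      then show ?thesis
        using v(3) that by simp
    qed
    then have "v = 0\<^sub>v m"
      using indep[of "\<lambda>i. v $ i"] v(1) by (intro eq_vecI) auto
    with v(2) show False ..
  qed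
  show "(\<Sum>j<m. a i j * adj_mat A $$ (j, k)) = (if i = k then det A else 0)" if "i < m" "k < m" for i k
  proof -
    have "(\<Sum>j<m. a i j * adj_mat A $$ (j, k)) = (A * adj_mat A) $$ (i, k)"
      using that A adj unfolding A_def by (simp add: scalar_prod_def atLeast0LessThan)
    then show ?thesis
      using adj_mat(2)[OF A] that by simp
  qed
  show "(\<Sum>j<m. adj_mat A $$ (i, j) * a j k) = (if i = k then det A else 0)" if "i < m" "k < m" for i k
  proof -
    have "(\<Sum>j<m. adj_mat A $$ (i, j) * a j k) = (adj_mat A * A) $$ (i, k)"
      using that A adj unfolding A_def by (simp add: scalar_prod_def atLeast0LessThan)
    then show ?thesis
      using adj_mat(3)[OF A] that by simp
  qed
qed

lemma adjugate_last_row_relation: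
  fixes a B :: "nat \<Rightarrow> nat \<Rightarrow> int"
  assumes BA: "\<And>i k. i < m \<Longrightarrow> k < m \<Longrightarrow> (\<Sum>j<m. B i j * a j k) = (if i = k then D else 0)"
    and "l < m"
  shows "(\<Sum>k<m. (\<Sum>j<m. a m j * B j k) * a k l) = D * a m l"
proof -
  have "(\<Sum>k<m. (\<Sum>j<m. a m j * B j k) * a k l) = (\<Sum>j<m. a m j * (\<Sum>k<m. B j k * a k l))"
    unfolding sum_distrib_left sum_distrib_right mult.assoc by (rule sum.swap)
  also have "\<dots> = (\<Sum>j<m. a m j * (if j = l then D else 0))"
    using BA \<open>l < m\<close> by (intro sum.cong) auto
  finally show ?thesis
    using \<open>l < m\<close> by (simp add: if_distrib cong: if_cong)
qed

lemma adjugate_solution: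
  fixes a B :: "nat \<Rightarrow> nat \<Rightarrow> int" and \<psi> :: "nat \<Rightarrow> real"
  assumes AB: "\<And>i k. i < m \<Longrightarrow> k < m \<Longrightarrow> (\<Sum>j<m. a i j * B j k) = (if i = k then D else 0)"
    and "D \<noteq> 0"
    and last: "(\<Sum>k<m. of_int (\<Sum>j<m. a m j * B j k) * \<psi> k) = of_int D * \<psi> m"
    and "i \<le> m"
  shows "(\<Sum>j<m. of_int (a i j) * ((\<Sum>k<m. of_int (B j k) * \<psi> k) / of_int D)) = \<psi> i"
proof -
  have "(\<Sum>j<m. of_int (a i j) * ((\<Sum>k<m. of_int (B j k) * \<psi> k) / of_int D))
      = (\<Sum>j<m. \<Sum>k<m. of_int (a i j) * (of_int (B j k) * \<psi> k)) / of_int D"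
    by (simp add: sum_divide_distrib sum_distrib_left)
  also have "\<dots> = (\<Sum>k<m. \<Sum>j<m. of_int (a i j) * (of_int (B j k) * \<psi> k)) / of_int D"
    by (subst sum.swap) (rule refl)
  also have "\<dots> = (\<Sum>k<m. of_int (\<Sum>j<m. a i j * B j k) * \<psi> k) / of_int D"
    by (simp add: sum_distrib_right mult.assoc)
  also have "(\<Sum>k<m. of_int (\<Sum>j<m. a i j * B j k) * \<psi> k) = of_int D * \<psi> i"
  proof (cases "i = m")
    case False
    then have "i < m"
      using \<open>i \<le> m\<close> by simp
    then have "(\<Sum>k<m. of_int (\<Sum>j<m. a i j * B j k) * \<psi> k) = (\<Sum>k<m. if k = i then of_int D * \<psi> k else 0)"
      using AB by (intro sum.cong) auto
    then show ?thesis
      using \<open>i < m\<close> by simp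
  qed (use last in simp)
  finally show ?thesis
    using \<open>D \<noteq> 0\<close> by simp
qed

lemma bezout_Gcd_sum:
  fixes f :: "'a \<Rightarrow> int"
  assumes "finite I"
  shows "\<exists>b. (\<Sum>i\<in>I. b i * f i) = Gcd (f ` I)"
  using assms
proof (induction I rule: finite_induct)
  case (insert x F)
  then obtain b where b: "(\<Sum>i\<in>F. b i * f i) = Gcd (f ` F)"
    by blast
  obtain u v where uv: "u * f x + v * Gcd (f ` F) = gcd (f x) (Gcd (f ` F))"
    using bezout_int by blast
  define b' where "b' i = (if i = x then u else v * b i)" for i
  have "(\<Sum>i\<in>F. b' i * f i) = v * (\<Sum>i\<in>F. b i * f i)"
    using insert(2) unfolding b'_def by (auto simp: sum_distrib_left mult.assoc intro!: sum.cong)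
  then have "(\<Sum>i\<in>insert x F. b' i * f i) = gcd (f x) (Gcd (f ` F))"
    using insert(1,2) uv b by (simp add: b'_def)
  then show ?case
    by (auto simp: Gcd_insert)
qed simp

lemma primitive_part:
  fixes c :: "'a \<Rightarrow> int"
  assumes "finite I" and "\<exists>i\<in>I. c i \<noteq> 0"
  obtains g c0 where "g \<noteq> 0" and "\<And>i. i \<in> I \<Longrightarrow> c i = g * c0 i"
    and "\<exists>b. (\<Sum>i\<in>I. b i * c0 i) = 1"
proof
  define g where "g = Gcd (c ` I)"
  show "g \<noteq> 0"
    using assms unfolding g_def by (auto simp: Gcd_0_iff)
  have dvd: "g dvd c i" if "i \<in> I" for i
    unfolding g_def using that by (simp add: Gcd_dvd)
  then show "c i = g * (c i div g)" if "i \<in> I" for i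
    using that by simp
  obtain b where "(\<Sum>i\<in>I. b i * c i) = g"
    using bezout_Gcd_sum[OF assms(1)] unfolding g_def by blast
  moreover have "g * (\<Sum>i\<in>I. b i * (c i div g)) = (\<Sum>i\<in>I. b i * c i)"
    unfolding sum_distrib_left by (intro sum.cong refl) (simp add: dvd mult.left_commute)
  ultimately have "(\<Sum>i\<in>I. b i * (c i div g)) = 1"
    using \<open>g \<noteq> 0\<close> by (metis mult.right_neutral mult_cancel_left)
  then show "\<exists>b. (\<Sum>i\<in>I. b i * (c i div g)) = 1"
    by blast
qed

lemma general_position_relation_nonzero:
  assumes gp: "general_position n \<alpha>"
    and rel: "\<And>j. j < n - 1 \<Longrightarrow> (\<Sum>i<n. c i * \<alpha> i j) = 0"
    and "p < n" "c p \<noteq> 0" "i < n"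
  shows "c i \<noteq> 0"
proof
  assume ci: "c i = 0"
  define S where "S = {..<n} - {i}"
  have "S \<subseteq> {..<n}" and "card S = n - 1"
    using \<open>i < n\<close> unfolding S_def by auto
  then have "weights_independent (n - 1) \<alpha> S"
    using gp unfolding general_position_def by blast
  moreover have "(\<Sum>l\<in>S. c l * \<alpha> l j) = 0" if "j < n - 1" for j
    using rel[OF that] ci sum.remove[of "{..<n}" i "\<lambda>l. c l * \<alpha> l j"] \<open>i < n\<close>
    unfolding S_def by simp
  ultimately have "\<forall>l\<in>S. c l = 0"
    unfolding weights_independent_def by blast
  moreover have "p \<in> S"
    using \<open>p < n\<close> \<open>c p \<noteq> 0\<close> ci unfolding S_def by auto
  ultimately show False
    using \<open>c p \<noteq> 0\<close> by blast
qed

lemma linear_eq_solvable_in_coordinate: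
  fixes c :: "nat \<Rightarrow> int" and \<phi>0 :: "nat \<Rightarrow> real"
  assumes "p < n" and "c p \<noteq> 0"
  obtains \<phi> where "(\<Sum>i<n. of_int (c i) * \<phi> i) = 0" and "\<And>i. i \<noteq> p \<Longrightarrow> \<phi> i = \<phi>0 i"
proof
  define s where "s = (\<Sum>i\<in>{..<n} - {p}. of_int (c i) * \<phi>0 i)"
  show "(\<Sum>i<n. of_int (c i) * (\<phi>0(p := - s / of_int (c p))) i) = 0"
    using assms by (simp add: sum.remove[of _ p] s_def)
qed simp

locale primitive_weight_relation =
  fixes n :: nat and \<alpha> :: "nat \<Rightarrow> nat \<Rightarrow> int" and c :: "nat \<Rightarrow> int"
  assumes n_pos: "n \<ge> 1"
    and coeff_nonzero: "\<And>i. i < n \<Longrightarrow> c i \<noteq> 0"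
    and relation: "\<And>j. j < n - 1 \<Longrightarrow> (\<Sum>i<n. c i * \<alpha> i j) = 0"
    and primitive: "\<exists>b. (\<Sum>i<n. b i * c i) = 1"
    and kernel_subset_range:
      "\<And>\<psi> :: nat \<Rightarrow> real. (\<Sum>i<n. of_int (c i) * \<psi> i) = 0 \<Longrightarrow> \<exists>x. \<forall>i<n. (\<Sum>j<n - 1. of_int (\<alpha> i j) * x j) = \<psi> i"

lemma general_position_relation:
  assumes "n \<ge> 1" and gp: "general_position n \<alpha>"
  obtains c where "\<And>i. i < n \<Longrightarrow> c i \<noteq> 0"
    and "\<And>j. j < n - 1 \<Longrightarrow> (\<Sum>i<n. c i * \<alpha> i j) = 0"
    and "\<And>\<psi> :: nat \<Rightarrow> real. (\<Sum>i<n. of_int (c i) * \<psi> i) = 0 \<Longrightarrow>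
      \<exists>x. \<forall>i<n. (\<Sum>j<n - 1. of_int (\<alpha> i j) * x j) = \<psi> i"
proof -
  obtain m where n: "n = Suc m"
    using assms(1) by (cases n) auto
  have "weights_independent m \<alpha> {..<m}"
    using gp unfolding general_position_def n by auto
  then have indep: "\<forall>i<m. v i = 0" if "\<forall>j<m. (\<Sum>i<m. v i * \<alpha> i j) = 0" for v
    using that unfolding weights_independent_def by (auto dest!: spec[of _ v])
  obtain D B where D: "D \<noteq> 0"
    and AB: "\<And>i k. i < m \<Longrightarrow> k < m \<Longrightarrow> (\<Sum>j<m. \<alpha> i j * B j k) = (if i = k then D else 0)"
    and BA: "\<And>i k. i < m \<Longrightarrow> k < m \<Longrightarrow> (\<Sum>j<m. B i j * \<alpha> j k) = (if i = k then D else 0)"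
    using int_matrix_adjugate[OF indep] by blast
  \<comment> \<open>With the adjugate B of the first m weights, D \<alpha>_m = \<Sum>_k e_k \<alpha>_k.\<close>
  define e where "e k = (\<Sum>j<m. \<alpha> m j * B j k)" for k
  define c where "c k = (if k < m then e k else - D)" for k
  have rel: "(\<Sum>i<n. c i * \<alpha> i j) = 0" if "j < n - 1" for j
    using adjugate_last_row_relation[OF BA, of j] that by (simp add: n c_def e_def)
  moreover have "c i \<noteq> 0" if "i < n" for i
    using general_position_relation_nonzero[OF gp rel, of m] that D by (simp add: n c_def)
  moreover have "\<exists>x. \<forall>i<n. (\<Sum>j<n - 1. of_int (\<alpha> i j) * x j) = \<psi> i"
    if "(\<Sum>i<n. of_int (c i) * \<psi> i) = 0" for \<psi> :: "nat \<Rightarrow> real"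
  proof -
    have last: "(\<Sum>k<m. of_int (\<Sum>j<m. \<alpha> m j * B j k) * \<psi> k) = of_int D * \<psi> m"
      using that by (simp add: n c_def e_def)
    show ?thesis
      using adjugate_solution[OF AB D last] unfolding n
      by (intro exI[of _ "\<lambda>j. (\<Sum>k<m. of_int (B j k) * \<psi> k) / of_int D"]) (simp add: less_Suc_eq_le)
  qed
  ultimately show ?thesis
    using that by blast
qed

lemma general_position_primitive_relation:
  assumes "n \<ge> 1" and "general_position n \<alpha>"
  obtains c where "primitive_weight_relation n \<alpha> c"
proof -
  obtain c' where nonzero: "\<And>i. i < n \<Longrightarrow> c' i \<noteq> 0"
    and rel: "\<And>j. j < n - 1 \<Longrightarrow> (\<Sum>i<n. c' i * \<alpha> i j) = 0"
    and range: "\<And>\<psi> :: nat \<Rightarrow> real. (\<Sum>i<n. of_int (c' i) * \<psi> i) = 0 \<Longrightarrow>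
      \<exists>x. \<forall>i<n. (\<Sum>j<n - 1. of_int (\<alpha> i j) * x j) = \<psi> i"
    using general_position_relation[OF assms] by blast
  have "\<exists>i\<in>{..<n}. c' i \<noteq> 0"
    using nonzero[of 0] assms(1) by auto
  then obtain g c where g: "g \<noteq> 0" and c': "\<And>i. i \<in> {..<n} \<Longrightarrow> c' i = g * c i"
    and "\<exists>b. (\<Sum>i<n. b i * c i) = 1"
    using primitive_part[of "{..<n}" c'] by blast
  have "primitive_weight_relation n \<alpha> c"
  proof
    show "c i \<noteq> 0" if "i < n" for i
      using nonzero[OF that] c' that by auto
    show "(\<Sum>i<n. c i * \<alpha> i j) = 0" if "j < n - 1" for j
      using rel[OF that] g by (simp add: c' sum_distrib_left[symmetric] mult.assoc)
    show "\<exists>x. \<forall>i<n. (\<Sum>j<n - 1. of_int (\<alpha> i j) * x j) = \<psi> i"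
      if "(\<Sum>i<n. of_int (c i) * \<psi> i) = 0" for \<psi> :: "nat \<Rightarrow> real"
      using range[of \<psi>] that by (simp add: c' sum_distrib_left[symmetric] mult.assoc)
  qed fact+
  then show ?thesis ..
qed

section \<open>Monomials and characters of the torus\<close>

lemma cis_Arg_unit:
  assumes "norm u = 1"
  shows "cis (Arg u) = u"
proof -
  have "u \<noteq> 0"
    using assms by auto
  then have "cis (Arg u) = sgn u"
    by (rule cis_Arg)
  then show ?thesis
    using assms by (simp add: sgn_div_norm)
qed

lemma cis_sum: "(\<Prod>i\<in>I. cis (f i)) = cis (\<Sum>i\<in>I. f i)"
  by (induction I rule: infinite_finite_induct) (simp_all add: cis_mult)

lemma cis_add_2pi_int: "cis (a + 2 * pi * of_int k) = cis a"
  by (simp add: cis_mult[symmetric])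

(* On the unit circle this is z powi k; unlike powi it is continuous at 0. *)
definition pow_cnj :: "complex \<Rightarrow> int \<Rightarrow> complex" where
  "pow_cnj z k = (if k \<ge> 0 then z ^ nat k else cnj z ^ nat (- k))"

lemma pow_cnj_cis_mult: "pow_cnj (cis a * z) k = cis (of_int k * a) * pow_cnj z k"
proof (cases "k \<ge> 0")
  case True
  have "cis a ^ nat k = cis (real (nat k) * a)"
    by (rule Complex.DeMoivre)
  then show ?thesis
    using True by (simp add: pow_cnj_def power_mult_distrib)
next
  case False
  have "cis (- a) ^ nat (- k) = cis (real (nat (- k)) * - a)"
    by (rule Complex.DeMoivre)
  then show ?thesis
    using False by (simp add: pow_cnj_def power_mult_distrib cis_cnj)
qed

lemma norm_pow_cnj: "norm (pow_cnj z k) = norm z ^ nat \<bar>k\<bar>"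
  by (simp add: pow_cnj_def norm_power)

lemma pow_cnj_eq_0_iff: "k \<noteq> 0 \<Longrightarrow> pow_cnj z k = 0 \<longleftrightarrow> z = 0"
  by (auto simp: pow_cnj_def)

lemma pow_cnj_of_real: "pow_cnj (of_real a) k = of_real (a ^ nat \<bar>k\<bar>)"
  by (simp add: pow_cnj_def)

lemma continuous_map_pow_cnj:
  "continuous_map X euclidean f \<Longrightarrow> continuous_map X euclidean (\<lambda>x. pow_cnj (f x) k)"
  unfolding pow_cnj_def by (cases "k \<ge> 0") (simp_all add: continuous_map_atin tendsto_power tendsto_cnj)

definition cnj_monomial :: "(nat \<Rightarrow> int) \<Rightarrow> nat \<Rightarrow> (nat \<Rightarrow> complex) \<Rightarrow> complex" where
  "cnj_monomial c n z = (\<Prod>i<n. pow_cnj (z i) (c i))"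

lemma cnj_monomial_cong: "(\<And>i. i < n \<Longrightarrow> z i = z' i) \<Longrightarrow> cnj_monomial c n z = cnj_monomial c n z'"
  by (simp add: cnj_monomial_def)

lemma cnj_monomial_cis_mult:
  "cnj_monomial c n (\<lambda>i. cis (\<theta> i) * z i) = cis (\<Sum>i<n. of_int (c i) * \<theta> i) * cnj_monomial c n z"
  by (simp add: cnj_monomial_def pow_cnj_cis_mult prod.distrib cis_sum)

lemma norm_cnj_monomial: "norm (cnj_monomial c n z) = (\<Prod>i<n. norm (z i) ^ nat \<bar>c i\<bar>)"
  by (simp add: cnj_monomial_def prod_norm[symmetric] norm_pow_cnj)

lemma cnj_monomial_eq_0_iff:
  "(\<And>i. i < n \<Longrightarrow> c i \<noteq> 0) \<Longrightarrow> cnj_monomial c n z = 0 \<longleftrightarrow> (\<exists>i<n. z i = 0)"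
  by (auto simp: cnj_monomial_def pow_cnj_eq_0_iff)

lemma sgn_cnj_monomial_polar:
  assumes "\<And>i. i < n \<Longrightarrow> r i > 0"
  shows "sgn (cnj_monomial c n (\<lambda>i. cis (\<theta> i) * of_real (r i))) = cis (\<Sum>i<n. of_int (c i) * \<theta> i)"
proof -
  have eq: "cnj_monomial c n (\<lambda>i. of_real (r i)) = of_real (\<Prod>i<n. r i ^ nat \<bar>c i\<bar>)"
    by (simp add: cnj_monomial_def pow_cnj_of_real)
  have "(\<Prod>i<n. r i ^ nat \<bar>c i\<bar>) > 0"
    using assms by (intro prod_pos) auto
  then have "sgn (cnj_monomial c n (\<lambda>i. of_real (r i))) = 1"
    unfolding eq sgn_of_real by simp
  then show ?thesis
    by (simp add: cnj_monomial_cis_mult sgn_mult)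
qed

lemma character_cis: "character m w (\<lambda>j. cis (x j)) = cis (\<Sum>j<m. of_int (w j) * x j)"
  by (simp add: character_def cis_power_int cis_sum)

lemma character_cong: "(\<And>j. j < m \<Longrightarrow> s j = t j) \<Longrightarrow> character m w s = character m w t"
  by (simp add: character_def)

lemma character_torus:
  "t \<in> torus m \<Longrightarrow> character m w t = cis (\<Sum>j<m. of_int (w j) * Arg (t j))"
  using character_cong[of m t "\<lambda>j. cis (Arg (t j))" w]
  by (simp add: torus_def cis_Arg_unit character_cis)

lemma norm_character_torus: "t \<in> torus m \<Longrightarrow> norm (character m w t) = 1"
  by (simp add: character_torus)

lemma character_mult: "character m w (\<lambda>j. s j * t j) = character m w s * character m w t"
  by (simp add: character_def power_int_mult_distrib prod.distrib)

lemma cis_in_torus: "(\<lambda>j. if j < m then cis (x j) else 1) \<in> torus m"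
  by (simp add: torus_def)

lemma torus_act_mult: "torus_act n \<alpha> s (torus_act n \<alpha> t z) = torus_act n \<alpha> (\<lambda>j. s j * t j) z"
  by (auto simp: torus_act_def character_mult)

lemma mem_torus_orbit_self: "\<forall>i\<ge>n. z i = 0 \<Longrightarrow> z \<in> torus_orbit n \<alpha> z"
proof -
  assume "\<forall>i\<ge>n. z i = 0"
  then have "torus_act n \<alpha> (\<lambda>j. 1) z = z"
    by (auto simp: torus_act_def character_def)
  moreover have "(\<lambda>j. 1) \<in> torus (n - 1)"
    by (simp add: torus_def)
  ultimately show ?thesis
    unfolding torus_orbit_def by (metis image_eqI)
qed

lemma torus_orbit_torus_act:
  assumes t: "t \<in> torus (n - 1)"
  shows "torus_orbit n \<alpha> (torus_act n \<alpha> t z) = torus_orbit n \<alpha> z"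
proof
  show "torus_orbit n \<alpha> (torus_act n \<alpha> t z) \<subseteq> torus_orbit n \<alpha> z"
    using t unfolding torus_orbit_def torus_def by (auto simp: torus_act_mult norm_mult)
  show "torus_orbit n \<alpha> z \<subseteq> torus_orbit n \<alpha> (torus_act n \<alpha> t z)"
  proof
    fix y assume "y \<in> torus_orbit n \<alpha> z"
    then obtain s where s: "s \<in> torus (n - 1)" "y = torus_act n \<alpha> s z"
      unfolding torus_orbit_def by auto
    define s' where "s' j = s j / t j" for j
    have "t j \<noteq> 0" for j
      using t unfolding torus_def by (cases "j < n - 1") auto
    then have "y = torus_act n \<alpha> s' (torus_act n \<alpha> t z)"
      using s by (simp add: torus_act_mult s'_def)
    moreover have "s' \<in> torus (n - 1)"
      using s t unfolding s'_def torus_def by (auto simp: norm_divide)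
    ultimately show "y \<in> torus_orbit n \<alpha> (torus_act n \<alpha> t z)"
      unfolding torus_orbit_def by auto
  qed
qed

lemma torus_orbit_eq_iff:
  assumes "\<forall>i\<ge>n. z i = 0" and "\<forall>i\<ge>n. z' i = 0"
  shows "torus_orbit n \<alpha> z = torus_orbit n \<alpha> z' \<longleftrightarrow> (\<exists>t\<in>torus (n - 1). torus_act n \<alpha> t z = z')"
proof
  assume "torus_orbit n \<alpha> z = torus_orbit n \<alpha> z'"
  then have "z' \<in> torus_orbit n \<alpha> z"
    using mem_torus_orbit_self[OF assms(2)] by simp
  then show "\<exists>t\<in>torus (n - 1). torus_act n \<alpha> t z = z'"
    unfolding torus_orbit_def by auto
qed (use torus_orbit_torus_act in metis)

context primitive_weight_relation
begin

(* Exactness of T^(n-1) -> T^n -> S^1 in the middle; primitivity of c enters here. *)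
lemma torus_lift:
  assumes "cis (\<Sum>i<n. of_int (c i) * \<phi> i) = 1"
  obtains t where "t \<in> torus (n - 1)" and "\<And>i. i < n \<Longrightarrow> character (n - 1) (\<alpha> i) t = cis (\<phi> i)"
proof -
  obtain N :: int where N: "(\<Sum>i<n. of_int (c i) * \<phi> i) = of_int N * (2 * pi)"
    using assms cis_eq_1_iff by blast
  obtain b where b: "(\<Sum>i<n. b i * c i) = 1"
    using primitive by blast
  define \<psi> where "\<psi> i = \<phi> i - 2 * pi * of_int (N * b i)" for i
  have "(\<Sum>i<n. of_int (c i) * \<psi> i)
      = (\<Sum>i<n. of_int (c i) * \<phi> i) - 2 * pi * of_int N * of_int (\<Sum>i<n. b i * c i)"
    by (simp add: \<psi>_def right_diff_distrib sum_subtractf sum_distrib_left mult_ac)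
  then obtain x where x: "\<And>i. i < n \<Longrightarrow> (\<Sum>j<n - 1. of_int (\<alpha> i j) * x j) = \<psi> i"
    using kernel_subset_range N b by fastforce
  show ?thesis
  proof
    show "(\<lambda>j. if j < n - 1 then cis (x j) else 1) \<in> torus (n - 1)"
      by (rule cis_in_torus)
    fix i assume "i < n"
    have "character (n - 1) (\<alpha> i) (\<lambda>j. if j < n - 1 then cis (x j) else 1) = cis (\<psi> i)"
      using character_cong[of "n - 1" _ "\<lambda>j. cis (x j)"] character_cis x[OF \<open>i < n\<close>] by simp
    also have "\<dots> = cis (\<phi> i)"
      using cis_add_2pi_int[of "\<psi> i" "N * b i"] by (simp add: \<psi>_def)
    finally show "character (n - 1) (\<alpha> i) (\<lambda>j. if j < n - 1 then cis (x j) else 1) = cis (\<phi> i)" .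
  qed
qed

lemma cnj_monomial_torus_act:
  assumes t: "t \<in> torus (n - 1)"
  shows "cnj_monomial c n (torus_act n \<alpha> t z) = cnj_monomial c n z"
proof -
  define \<theta> where "\<theta> i = (\<Sum>j<n - 1. of_int (\<alpha> i j) * Arg (t j))" for i
  have "cnj_monomial c n (torus_act n \<alpha> t z) = cnj_monomial c n (\<lambda>i. cis (\<theta> i) * z i)"
    unfolding torus_act_def character_torus[OF t] \<theta>_def by (rule cnj_monomial_cong) simp
  also have "\<dots> = cis (\<Sum>i<n. of_int (c i) * \<theta> i) * cnj_monomial c n z"
    by (rule cnj_monomial_cis_mult)
  also have "(\<Sum>i<n. of_int (c i) * \<theta> i) = (\<Sum>j<n - 1. Arg (t j) * of_int (\<Sum>i<n. c i * \<alpha> i j))"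
    by (simp add: \<theta>_def sum_distrib_left sum_distrib_right mult_ac sum.swap[of _ "{..<n}"])
  also have "\<dots> = 0"
    by (simp add: relation)
  finally show ?thesis
    by simp
qed

lemma exists_phases_in_kernel:
  assumes rotate: "\<And>i. i < n \<Longrightarrow> z i \<noteq> 0 \<Longrightarrow> cis (\<phi>0 i) * z i = z' i"
    and monomial: "\<forall>i<n. z i \<noteq> 0 \<Longrightarrow> cnj_monomial c n z' = cnj_monomial c n z"
  obtains \<phi> where "\<And>i. i < n \<Longrightarrow> z i \<noteq> 0 \<Longrightarrow> \<phi> i = \<phi>0 i"
    and "cis (\<Sum>i<n. of_int (c i) * \<phi> i) = 1"
proof (cases "\<forall>i<n. z i \<noteq> 0")
  case True
  have "cnj_monomial c n z' = cnj_monomial c n (\<lambda>i. cis (\<phi>0 i) * z i)"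
    using True rotate by (intro cnj_monomial_cong) auto
  then have "cis (\<Sum>i<n. of_int (c i) * \<phi>0 i) * cnj_monomial c n z = cnj_monomial c n z"
    using monomial True by (simp add: cnj_monomial_cis_mult)
  moreover have "cnj_monomial c n z \<noteq> 0"
    using True cnj_monomial_eq_0_iff coeff_nonzero by blast
  ultimately show ?thesis
    using that[of \<phi>0] by simp
next
  case False
  then obtain p where "p < n" "z p = 0"
    by auto
  \<comment> \<open>The phase of a vanishing coordinate is free and absorbs the constraint.\<close>
  moreover obtain \<phi> where "(\<Sum>i<n. of_int (c i) * \<phi> i) = 0" "\<And>i. i \<noteq> p \<Longrightarrow> \<phi> i = \<phi>0 i"
    using linear_eq_solvable_in_coordinate \<open>p < n\<close> coeff_nonzero by metis
  ultimately show ?thesis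
    using that[of \<phi>] by (metis cis_zero)
qed

lemma torus_act_exists:
  assumes z: "\<forall>i\<ge>n. z i = 0" and z': "\<forall>i\<ge>n. z' i = 0"
    and norms: "\<And>i. i < n \<Longrightarrow> norm (z' i) = norm (z i)"
    and monomial: "\<forall>i<n. z i \<noteq> 0 \<Longrightarrow> cnj_monomial c n z' = cnj_monomial c n z"
  obtains t where "t \<in> torus (n - 1)" and "torus_act n \<alpha> t z = z'"
proof -
  define \<phi>0 where "\<phi>0 i = Arg (if z i = 0 then 1 else z' i / z i)" for i
  have rotate: "cis (\<phi>0 i) * z i = z' i" if "i < n" "z i \<noteq> 0" for i
    using that norms[OF that(1)] by (simp add: \<phi>0_def cis_Arg_unit norm_divide)
  obtain \<phi> where \<phi>: "\<And>i. i < n \<Longrightarrow> z i \<noteq> 0 \<Longrightarrow> \<phi> i = \<phi>0 i"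
    and sum: "cis (\<Sum>i<n. of_int (c i) * \<phi> i) = 1"
    using exists_phases_in_kernel[OF rotate monomial] by blast
  obtain t where t: "t \<in> torus (n - 1)" and \<chi>: "\<And>i. i < n \<Longrightarrow> character (n - 1) (\<alpha> i) t = cis (\<phi> i)"
    using torus_lift[OF sum] by blast
  have "torus_act n \<alpha> t z i = z' i" for i
  proof (cases "i < n \<and> z i \<noteq> 0")
    case True
    then show ?thesis
      using \<phi> \<chi> rotate by (simp add: torus_act_def)
  next
    case False
    then show ?thesis
      using z z' norms[of i] by (auto simp: torus_act_def)
  qed
  then show ?thesis
    using that t by blast
qed

end

section \<open>The orbit map\<close>

lemma scaleR_norm_sgn: "norm x *\<^sub>R sgn x = (x :: 'a::real_normed_vector)"
  by (cases "x = 0") (simp_all add: sgn_div_norm)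

lemma Min_add_const:
  "finite S \<Longrightarrow> S \<noteq> {} \<Longrightarrow> Min ((\<lambda>x. f x + k) ` S) = Min (f ` S) + (k :: real)"
  using Min_add_commute[of S f k] by simp

definition min_norm :: "nat \<Rightarrow> (nat \<Rightarrow> complex) \<Rightarrow> real" where
  "min_norm n z = Min ((\<lambda>i. norm (z i)) ` {..<n})"

(* The factor min_norm makes the phase of the monomial continuous across its zeros and lets the
   modulus of phase_invariant record min_i |z_i|. *)
definition phase_invariant :: "(nat \<Rightarrow> int) \<Rightarrow> nat \<Rightarrow> (nat \<Rightarrow> complex) \<Rightarrow> complex" where
  "phase_invariant c n z = min_norm n z *\<^sub>R sgn (cnj_monomial c n z)"

definition orbit_invariant :: "(nat \<Rightarrow> int) \<Rightarrow> nat \<Rightarrow> (nat \<Rightarrow> complex) \<Rightarrow> nat \<Rightarrow> real" where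
  "orbit_invariant c n z k =
     (if k = 0 then Re (phase_invariant c n z) else if k = 1 then Im (phase_invariant c n z)
      else if k \<le> n then norm (z (k - 1)) - norm (z 0) else 0)"

definition norm_offset :: "(nat \<Rightarrow> real) \<Rightarrow> nat \<Rightarrow> real" where
  "norm_offset y l = (if l = 0 then 0 else y (Suc l))"

(* Inverts the moduli: |z_l| = (|z_l| - |z_0|) + min_i |z_i| - min_i (|z_i| - |z_0|). *)
definition reconstructed_norm :: "nat \<Rightarrow> (nat \<Rightarrow> real) \<Rightarrow> nat \<Rightarrow> real" where
  "reconstructed_norm n y l =
     norm_offset y l + cmod (Complex (y 0) (y 1)) - Min (norm_offset y ` {..<n})"

lemma min_norm_le: "i < n \<Longrightarrow> min_norm n z \<le> norm (z i)"
  by (simp add: min_norm_def)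

context primitive_weight_relation
begin

lemma min_norm_nonneg: "min_norm n z \<ge> 0"
  unfolding min_norm_def using n_pos by (subst Min_ge_iff) (auto simp: lessThan_empty_iff)

lemma min_norm_pos: "\<forall>i<n. z i \<noteq> 0 \<Longrightarrow> min_norm n z > 0"
  unfolding min_norm_def using n_pos by (subst Min_gr_iff) (auto simp: lessThan_empty_iff)

lemma norm_phase_invariant: "norm (phase_invariant c n z) = min_norm n z"
proof (cases "cnj_monomial c n z = 0")
  case True
  then obtain i where "i < n" "z i = 0"
    using cnj_monomial_eq_0_iff coeff_nonzero by blast
  then have "min_norm n z = 0"
    using min_norm_le[of i n z] min_norm_nonneg[of z] by simp
  then show ?thesis
    by (simp add: phase_invariant_def)
qed (simp add: phase_invariant_def norm_sgn min_norm_nonneg)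

lemma reconstructed_norm_orbit_invariant:
  assumes "l < n"
  shows "reconstructed_norm n (orbit_invariant c n z) l = norm (z l)"
proof -
  have offset: "norm_offset (orbit_invariant c n z) i = norm (z i) + - norm (z 0)" if "i < n" for i
    using that by (simp add: norm_offset_def orbit_invariant_def)
  have "Min (norm_offset (orbit_invariant c n z) ` {..<n}) = Min ((\<lambda>i. norm (z i) + - norm (z 0)) ` {..<n})"
    using offset by (intro arg_cong[where f = Min] image_cong) auto
  also have "\<dots> = min_norm n z - norm (z 0)"
    using n_pos unfolding min_norm_def by (subst Min_add_const) (auto simp: lessThan_empty_iff)
  finally show ?thesis
    using offset[OF assms] norm_phase_invariant[of z]
    by (simp add: reconstructed_norm_def orbit_invariant_def)
qed

lemma orbit_invariant_torus_act:
  assumes t: "t \<in> torus (n - 1)"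
  shows "orbit_invariant c n (torus_act n \<alpha> t z) = orbit_invariant c n z"
proof -
  have norms: "norm (torus_act n \<alpha> t z i) = norm (z i)" if "i < n" for i
    using that norm_character_torus[OF t] by (simp add: torus_act_def norm_mult)
  then have "min_norm n (torus_act n \<alpha> t z) = min_norm n z"
    unfolding min_norm_def by (intro arg_cong[where f = Min] image_cong) auto
  then have "phase_invariant c n (torus_act n \<alpha> t z) = phase_invariant c n z"
    by (simp add: phase_invariant_def cnj_monomial_torus_act[OF t])
  then show ?thesis
    using norms n_pos by (auto simp: orbit_invariant_def fun_eq_iff)
qed

lemma torus_orbit_eq_if_orbit_invariant_eq:
  assumes z: "\<forall>i\<ge>n. z i = 0" and z': "\<forall>i\<ge>n. z' i = 0"
    and eq: "orbit_invariant c n z = orbit_invariant c n z'"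
  shows "torus_orbit n \<alpha> z = torus_orbit n \<alpha> z'"
proof -
  have norms: "norm (z' i) = norm (z i)" if "i < n" for i
    using reconstructed_norm_orbit_invariant[OF that] eq by metis
  have "cnj_monomial c n z' = cnj_monomial c n z" if nonzero: "\<forall>i<n. z i \<noteq> 0"
  proof -
    have "min_norm n z' = min_norm n z"
      unfolding min_norm_def using norms by (intro arg_cong[where f = Min] image_cong) auto
    moreover have "phase_invariant c n z' = phase_invariant c n z"
      using fun_cong[OF eq, of 0] fun_cong[OF eq, of 1] by (simp add: orbit_invariant_def complex_eq_iff)
    ultimately have "sgn (cnj_monomial c n z') = sgn (cnj_monomial c n z)"
      using min_norm_pos[OF nonzero] by (simp add: phase_invariant_def)
    moreover have "norm (cnj_monomial c n z') = norm (cnj_monomial c n z)"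
      using norms by (simp add: norm_cnj_monomial)
    ultimately show ?thesis
      by (metis scaleR_norm_sgn)
  qed
  then obtain t where "t \<in> torus (n - 1)" "torus_act n \<alpha> t z = z'"
    using torus_act_exists[OF z z' norms] by blast
  then show ?thesis
    using torus_orbit_eq_iff[OF z z'] by blast
qed

lemma orbit_invariant_eqI:
  assumes y: "\<forall>i\<ge>n + 1. y i = 0"
    and phase: "phase_invariant c n z = Complex (y 0) (y 1)"
    and norms: "\<And>l. l < n \<Longrightarrow> norm (z l) = reconstructed_norm n y l"
  shows "orbit_invariant c n z = y"
proof
  fix k
  have diff: "reconstructed_norm n y l - reconstructed_norm n y 0 = norm_offset y l" for l
    unfolding reconstructed_norm_def using norm_offset_def[of y 0] by simp
  consider "k = 0" | "k = 1" | "2 \<le> k \<and> k \<le> n" | "n < k"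
    by linarith
  then show "orbit_invariant c n z k = y k"
  proof cases
    case 3
    then have "k - 1 < n" and "k \<noteq> 0" "k \<noteq> 1" "k \<le> n"
      by auto
    then have "orbit_invariant c n z k = reconstructed_norm n y (k - 1) - reconstructed_norm n y 0"
      using norms n_pos unfolding orbit_invariant_def by simp
    then show ?thesis
      using 3 diff[of "k - 1"] by (simp add: norm_offset_def)
  qed (use phase y in \<open>auto simp: orbit_invariant_def\<close>)
qed

lemma orbit_invariant_surjective:
  assumes y: "\<forall>i\<ge>n + 1. y i = 0"
  obtains z where "\<forall>i\<ge>n. z i = 0" and "orbit_invariant c n z = y"
proof -
  define w where "w = Complex (y 0) (y 1)"
  define r where "r = reconstructed_norm n y"
  define \<theta> where "\<theta> l = (if l = 0 then Arg w / of_int (c 0) else 0)" for l :: nat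
  define z where "z l = (if l < n then cis (\<theta> l) * of_real (r l) else 0)" for l
  have r_ge: "r l \<ge> norm w" if "l < n" for l
    using that by (simp add: r_def reconstructed_norm_def w_def)
  have norm_z: "norm (z l) = r l" if "l < n" for l
    using that order_trans[OF norm_ge_zero r_ge[OF that]] by (simp add: z_def norm_mult)
  have "min_norm n z = Min ((\<lambda>l. norm_offset y l + (norm w - Min (norm_offset y ` {..<n}))) ` {..<n})"
    unfolding min_norm_def using norm_z
    by (intro arg_cong[where f = Min] image_cong) (auto simp: r_def reconstructed_norm_def w_def)
  then have min_norm_z: "min_norm n z = norm w"
    using n_pos by (subst (asm) Min_add_const) (auto simp: lessThan_empty_iff)
  have "sgn (cnj_monomial c n z) = sgn w" if "w \<noteq> 0"
  proof -
    have "r l > 0" if "l < n" for l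
      using r_ge[OF that] \<open>w \<noteq> 0\<close> by (meson less_le_trans zero_less_norm_iff)
    then have "sgn (cnj_monomial c n z) = cis (\<Sum>i<n. of_int (c i) * \<theta> i)"
      using sgn_cnj_monomial_polar[of n r c \<theta>] cnj_monomial_cong[of n z] by (simp add: z_def)
    moreover have "(\<Sum>i<n. of_int (c i) * \<theta> i)
        = (\<Sum>i<n. if i = 0 then of_int (c 0) * (Arg w / of_int (c 0)) else 0)"
      by (intro sum.cong) (auto simp: \<theta>_def)
    moreover have "\<dots> = Arg w"
      using n_pos coeff_nonzero[of 0] by simp
    ultimately show ?thesis
      using cis_Arg[OF that] by simp
  qed
  then have "phase_invariant c n z = w"
    using min_norm_z by (cases "w = 0") (simp_all add: phase_invariant_def scaleR_norm_sgn)
  then have "orbit_invariant c n z = y"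
    using orbit_invariant_eqI[OF y] norm_z unfolding w_def r_def by blast
  then show ?thesis
    using that[of z] by (auto simp: z_def)
qed

lemma norm_le_orbit_invariant:
  assumes "l < n"
  shows "norm (z l) \<le> 3 * (\<Sum>k\<le>n. \<bar>orbit_invariant c n z k\<bar>)"
proof -
  define y where "y = orbit_invariant c n z"
  define S where "S = (\<Sum>k\<le>n. \<bar>y k\<bar>)"
  have y_le: "\<bar>y k\<bar> \<le> S" if "k \<le> n" for k
    unfolding S_def using that by (intro member_le_sum) auto
  have offset_le: "\<bar>norm_offset y j\<bar> \<le> S" if "j < n" for j
    using that y_le[of "Suc j"] y_le[of 0] unfolding norm_offset_def by (auto simp: S_def intro: sum_nonneg)
  have "\<bar>y 0\<bar> + \<bar>y 1\<bar> = (\<Sum>k\<in>{0, 1}. \<bar>y k\<bar>)"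
    by simp
  also have "\<dots> \<le> S"
    unfolding S_def using n_pos by (intro sum_mono2) auto
  finally have w_le: "cmod (Complex (y 0) (y 1)) \<le> S"
    using cmod_le[of "Complex (y 0) (y 1)"] by simp
  have "Min (norm_offset y ` {..<n}) \<in> norm_offset y ` {..<n}"
    using n_pos by (intro Min_in) (auto simp: lessThan_empty_iff)
  then obtain l0 where "l0 < n" "Min (norm_offset y ` {..<n}) = norm_offset y l0"
    by auto
  then have "reconstructed_norm n y l \<le> S + S + S"
    using offset_le[OF assms] offset_le[OF \<open>l0 < n\<close>] w_le unfolding reconstructed_norm_def by linarith
  then show ?thesis
    using reconstructed_norm_orbit_invariant[OF assms] unfolding y_def S_def by simp
qed

lemma continuous_map_phase_invariant:
  "continuous_map (Complex_space n) euclidean (phase_invariant c n)"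
proof -
  let ?K = "{p :: real \<times> complex. snd p = 0 \<longrightarrow> fst p = 0}"
  have "continuous_map (Complex_space n) euclideanreal (min_norm n)"
    unfolding min_norm_def[abs_def] using n_pos
    by (intro continuous_map_Min continuous_map_norm continuous_map_Complex_space_coordinate)
      (auto simp: lessThan_empty_iff)
  moreover have "continuous_map (Complex_space n) euclidean (cnj_monomial c n)"
    unfolding cnj_monomial_def[abs_def]
    by (intro continuous_map_prod_normed_algebra continuous_map_pow_cnj continuous_map_Complex_space_coordinate) auto
  moreover have "(min_norm n z, cnj_monomial c n z) \<in> ?K" for z
    using norm_phase_invariant[of z] by (auto simp: phase_invariant_def)
  ultimately have "continuous_map (Complex_space n) (top_of_set ?K) (\<lambda>z. (min_norm n z, cnj_monomial c n z))"
    unfolding continuous_map_in_subtopology by (auto intro: continuous_map_pair_euclidean)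
  then have "continuous_map (Complex_space n) euclidean
      ((\<lambda>p. fst p *\<^sub>R sgn (snd p)) \<circ> (\<lambda>z. (min_norm n z, cnj_monomial c n z)))"
    using continuous_map_compose continuous_on_scaleR_sgn continuous_map_iff_continuous by blast
  then show ?thesis
    by (simp add: phase_invariant_def[abs_def] comp_def)
qed

lemma continuous_map_orbit_invariant:
  "continuous_map (Complex_space n) (Euclidean_space (n + 1)) (orbit_invariant c n)"
proof -
  have "orbit_invariant c n = (\<lambda>z k. if k < n + 1 then orbit_invariant c n z k else 0)"
    using n_pos by (auto simp: fun_eq_iff orbit_invariant_def)
  moreover have "continuous_map (Complex_space n) euclideanreal (\<lambda>z. orbit_invariant c n z k)" for k
  proof -
    consider "k = 0" | "k = 1" | "2 \<le> k \<and> k \<le> n" | "n < k"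
      by linarith
    then show ?thesis
    proof cases
      case 1
      then show ?thesis
        using continuous_map_phase_invariant
        by (simp add: orbit_invariant_def continuous_map_atin tendsto_Re)
    next
      case 2
      then show ?thesis
        using continuous_map_phase_invariant
        by (simp add: orbit_invariant_def continuous_map_atin tendsto_Im)
    next
      case 3
      then have "(\<lambda>z. orbit_invariant c n z k) = (\<lambda>z. norm (z (k - 1)) - norm (z 0))"
        by (simp add: orbit_invariant_def)
      then show ?thesis
        by (simp add: continuous_map_diff continuous_map_norm continuous_map_Complex_space_coordinate)
    qed (use n_pos in \<open>simp add: orbit_invariant_def\<close>)
  qed
  ultimately show ?thesis
    by (metis continuous_map_componentwise_Euclidean_space)
qed

lemma compactin_orbit_invariant_preimage:
  assumes K: "compactin (Euclidean_space (n + 1)) K"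
  shows "compactin (Complex_space n) {z \<in> topspace (Complex_space n). orbit_invariant c n z \<in> K}"
proof -
  have "continuous_map (Euclidean_space (n + 1)) euclideanreal (\<lambda>y. \<Sum>k\<le>n. \<bar>y k\<bar>)"
    by (intro continuous_map_sum continuous_map_real_abs continuous_map_Euclidean_space_coordinate) auto
  then have "compact ((\<lambda>y. \<Sum>k\<le>n. \<bar>y k\<bar>) ` K)"
    using image_compactin[OF K] compactin_euclidean_iff by blast
  then obtain R where R: "\<And>y. y \<in> K \<Longrightarrow> (\<Sum>k\<le>n. \<bar>y k\<bar>) \<le> R"
    using compact_imp_bounded bounded_real by (metis abs_le_D1 imageI)
  have closed: "closedin (Complex_space n) {z \<in> topspace (Complex_space n). orbit_invariant c n z \<in> K}"
    using closedin_continuous_map_preimage[OF continuous_map_orbit_invariant]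
      compactin_imp_closedin[OF Hausdorff_Euclidean_space K] by blast
  have bounded: "{z \<in> topspace (Complex_space n). orbit_invariant c n z \<in> K}
      \<subseteq> {z. (\<forall>i<n. norm (z i) \<le> 3 * R) \<and> (\<forall>i\<ge>n. z i = 0)}"
  proof
    fix z assume "z \<in> {z \<in> topspace (Complex_space n). orbit_invariant c n z \<in> K}"
    then have z: "z \<in> topspace (Complex_space n)" "orbit_invariant c n z \<in> K"
      by auto
    have "norm (z i) \<le> 3 * R" if "i < n" for i
      using norm_le_orbit_invariant[OF that, of z] R[OF z(2)] by linarith
    then show "z \<in> {z. (\<forall>i<n. norm (z i) \<le> 3 * R) \<and> (\<forall>i\<ge>n. z i = 0)}"
      using z(1) by (simp add: topspace_Complex_space)
  qed
  show ?thesis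
    by (rule closed_compactin[OF compactin_Complex_space_box bounded closed])
qed

lemma orbit_invariant_image:
  "orbit_invariant c n ` topspace (Complex_space n) = topspace (Euclidean_space (n + 1))"
proof
  show "orbit_invariant c n ` topspace (Complex_space n) \<subseteq> topspace (Euclidean_space (n + 1))"
    by (rule continuous_map_image_subset_topspace[OF continuous_map_orbit_invariant])
  show "topspace (Euclidean_space (n + 1)) \<subseteq> orbit_invariant c n ` topspace (Complex_space n)"
  proof
    fix y assume "y \<in> topspace (Euclidean_space (n + 1))"
    then have "\<forall>i\<ge>n + 1. y i = 0"
      by (simp add: topspace_Euclidean_space)
    then obtain z where "\<forall>i\<ge>n. z i = 0" and "orbit_invariant c n z = y"
      by (rule orbit_invariant_surjective)
    then show "y \<in> orbit_invariant c n ` topspace (Complex_space n)"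
      by (auto simp: topspace_Complex_space)
  qed
qed

lemma orbit_space_homeomorphic_Euclidean_space:
  "orbit_space n \<alpha> homeomorphic_space Euclidean_space (n + 1)"
  unfolding orbit_space_def
proof (rule quotient_topology_homeomorphic_space)
  show "quotient_map (Complex_space n) (Euclidean_space (n + 1)) (orbit_invariant c n)"
    by (rule quotient_map_into_Euclidean_space[OF continuous_map_orbit_invariant
          orbit_invariant_image compactin_orbit_invariant_preimage])
  fix z z' assume "z \<in> topspace (Complex_space n)" "z' \<in> topspace (Complex_space n)"
  then have z: "\<forall>i\<ge>n. z i = 0" and z': "\<forall>i\<ge>n. z' i = 0"
    by (auto simp: topspace_Complex_space)
  show "torus_orbit n \<alpha> z = torus_orbit n \<alpha> z' \<longleftrightarrow> orbit_invariant c n z = orbit_invariant c n z'"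
  proof
    assume "torus_orbit n \<alpha> z = torus_orbit n \<alpha> z'"
    then obtain t where "t \<in> torus (n - 1)" and "torus_act n \<alpha> t z = z'"
      using torus_orbit_eq_iff[OF z z'] by blast
    then show "orbit_invariant c n z = orbit_invariant c n z'"
      using orbit_invariant_torus_act[of t z] by simp
  qed (rule torus_orbit_eq_if_orbit_invariant_eq[OF z z'])
qed

end

theorem lemma2p11:
  fixes n :: nat and \<alpha> :: "nat \<Rightarrow> nat \<Rightarrow> int"
  assumes "n \<ge> 1"
    and "general_position n \<alpha>"
  shows "orbit_space n \<alpha> homeomorphic_space Euclidean_space (n + 1)"
proof -
  obtain c where "primitive_weight_relation n \<alpha> c"
    using general_position_primitive_relation[OF assms] by blast
  then show ?thesis
    by (rule primitive_weight_relation.orbit_space_homeomorphic_Euclidean_space)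
qed

end
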